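(* Let $q$ be a prime power, $n$ a positive integer, $L(x)=\sum_{i=0}^{n-1}a_ix^{q^{2i}}$ with $a_i\in\mathbb F_{q^{2n}}$, and let $r=n-\dim\ker(L^*+L)$. Then \[\mathcal S(L)=\sum_{u\in\mathbb F_{q^{2n}}}\psi(\rho_L(u))=(-1)^rq^{2n-r}.\]
   Context: $\mathrm{Tr}$ is the trace $\mathbb F_{q^{2n}}\to\mathbb F_{q^2}$; $\sigma_L(u,v)=\mathrm{Tr}(uL(v^q))$; $\rho_L(u)=\sigma_L(u,u)^q+\sigma_L(u,u)\in\mathbb F_q$. $\psi$ is the canonical additive character of $\mathbb F_q$. $L^*(x)=\sum_{i=0}^{n-1}(a_i^qx)^{q^{2(n-i-1)}}$. Kernels are of the induced $\mathbb F_{q^2}$-linear maps on $\mathbb F_{q^{2n}}$, dimensions over $\mathbb F_{q^2}$. *)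

theory Defs
  imports Complex_Main "HOL-Computational_Algebra.Primes"
begin

text \<open>The ambient field 'a plays the role of F_{q^(2n)}; the subfields F_{q^2}, F_q
  are the fixed points of x ^ (q^2), x ^ q respectively.\<close>

definition linL :: "nat \<Rightarrow> nat \<Rightarrow> (nat \<Rightarrow> 'a::field) \<Rightarrow> 'a \<Rightarrow> 'a" where
  "linL q n a x = (\<Sum>i<n. a i * x ^ (q ^ (2 * i)))"

definition linLstar :: "nat \<Rightarrow> nat \<Rightarrow> (nat \<Rightarrow> 'a::field) \<Rightarrow> 'a \<Rightarrow> 'a" where
  "linLstar q n a x = (\<Sum>i<n. (a i ^ q * x) ^ (q ^ (2 * (n - i - 1))))"

definition trq2 :: "nat \<Rightarrow> nat \<Rightarrow> 'a::field \<Rightarrow> 'a" where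
  "trq2 q n x = (\<Sum>j<n. x ^ (q ^ (2 * j)))"

definition sigmaL :: "nat \<Rightarrow> nat \<Rightarrow> (nat \<Rightarrow> 'a::field) \<Rightarrow> 'a \<Rightarrow> 'a \<Rightarrow> 'a" where
  "sigmaL q n a u v = trq2 q n (u * linL q n a (v ^ q))"

definition rhoL :: "nat \<Rightarrow> nat \<Rightarrow> (nat \<Rightarrow> 'a::field) \<Rightarrow> 'a \<Rightarrow> 'a" where
  "rhoL q n a u = sigmaL q n a u u ^ q + sigmaL q n a u u"

text \<open>Canonical additive character of F_q, q = p^e, p the characteristic:
  psi(c) = exp(2 pi i Tr_{F_q/F_p}(c) / p), the absolute trace being identified
  with an integer k in {0..p-1} via the prime field.\<close>
definition psi :: "nat \<Rightarrow> nat \<Rightarrow> 'a::field \<Rightarrow> complex" where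
  "psi p e c = (let t = (\<Sum>j<e. c ^ (p ^ j));
                    k = (THE k. k < p \<and> (of_nat k :: 'a) = t)
                in cis (2 * pi * real k / real p))"

definition kerLL :: "nat \<Rightarrow> nat \<Rightarrow> (nat \<Rightarrow> 'a::field) \<Rightarrow> 'a set" where
  "kerLL q n a = {x. linLstar q n a x + linL q n a x = 0}"

definition dimq2 :: "nat \<Rightarrow> 'a set \<Rightarrow> nat" where
  "dimq2 q V = (THE d. card V = (q ^ 2) ^ d)"

definition SL :: "nat \<Rightarrow> nat \<Rightarrow> nat \<Rightarrow> nat \<Rightarrow> (nat \<Rightarrow> 'a::{field,finite}) \<Rightarrow> complex" where
  "SL p e q n a = (\<Sum>u\<in>(UNIV::'a set). psi p e (rhoL q n a u))"

end

theory Submission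
  imports Defs "HOL-Computational_Algebra.Polynomial" "HOL-Number_Theory.Cong"
begin

text \<open>
  The form rho takes its values in F_q, and rho(l u) = l^(q+1) rho(u) for l in F_(q^2). Since
  the norm l |-> l^(q+1) maps F_(q^2)^* onto F_q^*, all nonzero values of rho are taken equally
  often, so S(L) = N(0) - N(1) is an integer, where N(c) counts the solutions of rho(u) = c;
  the same holds for the sum of psi(-rho(u)). By the adjoint identity
  sigma(w,v)^q = Tr(v L^*(w^q)), the polarization rho(w+v) - rho(w) - rho(v) is the F_q-linear
  form v |-> T(Tr(v (L^*+L)(w^q))), where T is the trace from F_(q^2) to F_q. Expanding S(L)^2
  as a double sum, orthogonality of psi leaves only the w with (L^*+L)(w^q) = 0, so
  S(L)^2 = q^(2n) |ker(L^*+L)| = q^(2(n+k)) with k = dim ker(L^*+L). The sign is determined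
  modulo q+1: the norm-one elements of F_(q^2), q+1 of them, act freely on every fibre of rho
  with the zero vector removed, hence S(L) = 1 (mod q+1), whereas q^(n+k) = (-1)^(n+k)
  (mod q+1).
\<close>

section \<open>Finite fields\<close>

lemma finite_field_pow_card_minus_one:
  fixes x :: "'a::{field,finite}"
  assumes "x \<noteq> 0"
  shows "x ^ (card (UNIV :: 'a set) - 1) = 1"
proof -
  have "(\<Prod>y\<in>UNIV-{0}. y) = (\<Prod>y\<in>UNIV-{0}. x * y)"
    by (rule prod.reindex_bij_witness[of _ "\<lambda>y. x * y" "\<lambda>y. y / x"]) (use assms in auto)
  also have "\<dots> = x ^ (card (UNIV :: 'a set) - 1) * (\<Prod>y\<in>UNIV-{0::'a}. y)"
    by (simp add: prod.distrib card_Diff_singleton)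
  finally show ?thesis
    by simp
qed

lemma finite_field_pow_card: "x ^ card (UNIV :: 'a set) = (x :: 'a::{field,finite})"
proof (cases "x = 0")
  case False
  have "card (UNIV :: 'a set) = Suc (card (UNIV :: 'a set) - 1)"
    using finite_UNIV_card_ge_0[where ?'a = 'a] by simp
  then show ?thesis
    using finite_field_pow_card_minus_one[OF False] by (metis mult.right_neutral power_Suc)
qed (simp add: finite_UNIV_card_ge_0)

lemma
  fixes d :: "nat \<Rightarrow> nat"
  assumes "strict_mono d" "k > 0"
  shows finite_zeros_lacunary_sum: "finite {x::'a::field. (\<Sum>j<k. x ^ d j) = 0}"
    and card_zeros_lacunary_sum_le: "card {x::'a::field. (\<Sum>j<k. x ^ d j) = 0} \<le> d (k - 1)"
proof -
  define P :: "'a poly" where "P = (\<Sum>j<k. monom 1 (d j))"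
  have zeros: "{x. (\<Sum>j<k. x ^ d j) = 0} = {x. poly P x = 0}"
    by (simp add: P_def poly_sum poly_monom)
  have "coeff P (d (k - 1)) = (\<Sum>j<k. if j = k - 1 then 1 else 0)"
    unfolding P_def coeff_sum coeff_monom
    using strict_mono_eq[OF assms(1)] by (intro sum.cong refl) simp
  also have "\<dots> = 1"
    using assms(2) by simp
  finally have "P \<noteq> 0"
    by auto
  then show "finite {x::'a. (\<Sum>j<k. x ^ d j) = 0}"
    unfolding zeros by (rule poly_roots_finite)
  have "degree (monom (1::'a) (d j)) \<le> d (k - 1)" if "j < k" for j
    using strict_mono_leD[OF assms(1), of j "k - 1"] that by (simp add: degree_monom_eq)
  then have "degree P \<le> d (k - 1)"
    unfolding P_def by (intro degree_sum_le) auto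
  then show "card {x::'a. (\<Sum>j<k. x ^ d j) = 0} \<le> d (k - 1)"
    unfolding zeros using card_poly_roots_bound[OF \<open>P \<noteq> 0\<close>] by linarith
qed

lemma ex_lacunary_sum_nonzero:
  fixes d :: "nat \<Rightarrow> nat" and A :: "'a::field set"
  assumes "strict_mono d" "k > 0" "d (k - 1) < card A"
  shows "\<exists>x\<in>A. (\<Sum>j<k. x ^ d j) \<noteq> 0"
proof (rule ccontr)
  assume "\<not> ?thesis"
  then have "card A \<le> card {x::'a. (\<Sum>j<k. x ^ d j) = 0}"
    using finite_zeros_lacunary_sum[OF assms(1,2)] by (intro card_mono) auto
  then show False
    using card_zeros_lacunary_sum_le[OF assms(1,2), where ?'a = 'a] assms(3) by linarith
qed

lemma
  assumes "m > 0"
  shows finite_pow_eq: "finite {x::'a::field. x ^ m = y}"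
    and card_pow_eq_le: "card {x::'a::field. x ^ m = y} \<le> m"
proof -
  define P :: "'a poly" where "P = monom 1 m - [:y:]"
  have zeros: "{x. x ^ m = y} = {x. poly P x = 0}"
    by (simp add: P_def poly_monom)
  have "coeff P m = 1"
    using assms unfolding P_def by (cases m) simp_all
  then have "P \<noteq> 0"
    by auto
  then show "finite {x::'a. x ^ m = y}"
    unfolding zeros by (rule poly_roots_finite)
  have "card {x. poly P x = 0} \<le> degree P"
    using \<open>P \<noteq> 0\<close> by (rule card_poly_roots_bound)
  also have "degree P \<le> m"
    unfolding P_def by (intro degree_diff_le degree_monom_le) auto
  finally show "card {x::'a. x ^ m = y} \<le> m"
    unfolding zeros .
qed

lemma card_roots_of_unity_finite_field:
  assumes "m > 0" "m dvd card (UNIV :: 'a::{field,finite} set) - 1"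
  shows "card {x::'a. x ^ m = 1} = m"
proof (rule antisym)
  show "card {x::'a. x ^ m = 1} \<le> m"
    using assms(1) by (rule card_pow_eq_le)
  obtain k where k: "card (UNIV :: 'a set) - 1 = m * k"
    using assms(2) by blast
  have "card (UNIV :: 'a set) \<ge> 2"
    using card_mono[of UNIV "{0::'a, 1}"] by simp
  then have "k > 0"
    using k by (cases k) auto
  define G where "G = {x::'a. (\<Sum>i<k. x ^ (m * i)) = 0}"
  have "card G \<le> m * (k - 1)"
    unfolding G_def using card_zeros_lacunary_sum_le[of "\<lambda>i. m * i" k] assms(1) \<open>k > 0\<close>
    by (simp add: strict_mono_def)
  have "UNIV - {0} \<subseteq> {x::'a. x ^ m = 1} \<union> G"
  proof
    fix x :: 'a
    assume "x \<in> UNIV - {0}"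
    then have "(x ^ m) ^ k - 1 = 0"
      using finite_field_pow_card_minus_one[of x] k by (simp add: power_mult)
    then have "(x ^ m - 1) * (\<Sum>i<k. (x ^ m) ^ i) = 0"
      by (simp add: power_diff_1_eq)
    then show "x \<in> {x. x ^ m = 1} \<union> G"
      unfolding G_def by (simp add: power_mult)
  qed
  then have "card (UNIV - {0::'a}) \<le> card ({x::'a. x ^ m = 1} \<union> G)"
    by (intro card_mono) simp_all
  also have "\<dots> \<le> card {x::'a. x ^ m = 1} + card G"
    by (rule card_Un_le)
  finally have "card (UNIV - {0::'a}) \<le> card {x::'a. x ^ m = 1} + card G" .
  then have "m * k \<le> card {x::'a. x ^ m = 1} + m * (k - 1)"
    using k \<open>card G \<le> m * (k - 1)\<close> by (simp add: card_Diff_singleton)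
  moreover have "m * k = m + m * (k - 1)"
    using \<open>k > 0\<close> by (cases k) auto
  ultimately show "m \<le> card {x::'a. x ^ m = 1}"
    by linarith
qed

lemma power_eq_self_iff:
  fixes x :: "'a::field"
  assumes "m > 0"
  shows "x ^ m = x \<longleftrightarrow> x = 0 \<or> x ^ (m - 1) = 1"
proof -
  have "x ^ m = x * x ^ (m - 1)"
    using assms by (simp flip: power_Suc)
  then show ?thesis
    by auto
qed

lemma card_power_eq_self_finite_field:
  assumes "m > 1" "m - 1 dvd card (UNIV :: 'a::{field,finite} set) - 1"
  shows "card {x::'a. x ^ m = x} = m"
proof -
  have "{x::'a. x ^ m = x} = insert 0 {x. x ^ (m - 1) = 1}"
    using assms(1) by (auto simp: power_eq_self_iff)
  moreover have "0 \<notin> {x::'a. x ^ (m - 1) = 1}"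
    using assms(1) by (simp add: power_0_left)
  ultimately show ?thesis
    using card_roots_of_unity_finite_field[OF _ assms(2)] assms(1) by simp
qed

lemma prime_subfield_eq:
  assumes "prime CHAR('a::field)"
  shows "{x::'a. x ^ CHAR('a) = x} = of_nat ` {..<CHAR('a)}"
proof (rule card_seteq[symmetric])
  let ?p = "CHAR('a)"
  have p: "?p > 0" "?p - 1 > 0"
    using prime_gt_1_nat[OF assms] by simp_all
  have "of_nat k ^ ?p = (of_nat k :: 'a)" for k
  proof (induction k)
    case (Suc k)
    then show ?case
      using freshmans_dream[OF assms refl, of "of_nat k" 1] by (simp add: add.commute)
  qed (use p in simp)
  then show "of_nat ` {..<?p} \<subseteq> {x::'a. x ^ ?p = x}"
    by auto
  have roots: "{x::'a. x ^ ?p = x} = insert 0 {x. x ^ (?p - 1) = 1}"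
    by (auto simp: power_eq_self_iff[OF p(1)])
  then show "finite {x::'a. x ^ ?p = x}"
    using finite_pow_eq[OF p(2)] by simp
  have "inj_on (of_nat :: nat \<Rightarrow> 'a) {..<?p}"
  proof (rule inj_onI)
    fix i j
    assume "i \<in> {..<?p}" "j \<in> {..<?p}" "(of_nat i :: 'a) = of_nat j"
    then show "i = j"
      using cong_less_modulus_unique_nat of_nat_eq_iff_cong_CHAR by blast
  qed
  have "card {x::'a. x ^ ?p = x} \<le> Suc (card {x::'a. x ^ (?p - 1) = 1})"
    unfolding roots using finite_pow_eq[OF p(2), of "1::'a"] by (simp add: card_insert_if)
  also have "\<dots> \<le> ?p"
    using card_pow_eq_le[OF p(2), of "1::'a"] p(1) by simp
  also have "\<dots> = card (of_nat ` {..<?p} :: 'a set)"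
    using \<open>inj_on of_nat {..<?p}\<close> by (simp add: card_image)
  finally show "card {x::'a. x ^ ?p = x} \<le> card (of_nat ` {..<?p} :: 'a set)" .
qed

lemma card_dvd_card_if_free_action:
  fixes U A :: "'a::field set"
  assumes "finite A" "0 \<notin> A" "1 \<in> U"
    and mult_closed: "\<And>l l'. l \<in> U \<Longrightarrow> l' \<in> U \<Longrightarrow> l * l' \<in> U"
    and inverse_closed: "\<And>l. l \<in> U \<Longrightarrow> inverse l \<in> U"
    and action_closed: "\<And>l x. l \<in> U \<Longrightarrow> x \<in> A \<Longrightarrow> l * x \<in> A"
  shows "card U dvd card A"
proof -
  define r where "r = {(x, y). x \<in> A \<and> (\<exists>l\<in>U. y = l * x)}"
  have "equiv A r"
  proof (rule equivI)
    show "refl_on A r"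
      unfolding refl_on_def r_def using assms(3) action_closed by force
    show "sym r"
    proof (rule symI)
      fix x y
      assume "(x, y) \<in> r"
      then obtain l where l: "x \<in> A" "l \<in> U" "y = l * x"
        by (auto simp: r_def)
      then have "l \<noteq> 0"
        using assms(2) action_closed by force
      then have "x = inverse l * y"
        using l by simp
      then show "(y, x) \<in> r"
        using l action_closed inverse_closed by (auto simp: r_def)
    qed
    show "trans r"
    proof (rule transI)
      fix x y z
      assume "(x, y) \<in> r" "(y, z) \<in> r"
      then obtain l l' where "x \<in> A" "l \<in> U" "y = l * x" "l' \<in> U" "z = l' * y"
        by (auto simp: r_def)
      then show "(x, z) \<in> r"
        unfolding r_def using mult_closed[of l' l] by (auto simp: mult.assoc)
    qed
  qed (auto simp: r_def action_closed)
  moreover have "card U dvd card X" if X: "X \<in> A // r" for X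
  proof -
    obtain x where x: "x \<in> A" "X = r `` {x}"
      using X by (rule quotientE)
    then have "X = (\<lambda>l. l * x) ` U"
      by (auto simp: r_def)
    moreover have "inj_on (\<lambda>l. l * x) U"
      using x assms(2) by (auto simp: inj_on_def)
    ultimately show ?thesis
      by (simp add: card_image)
  qed
  ultimately show ?thesis
    using equiv_imp_dvd_card assms(1) by blast
qed

section \<open>Subspaces over a subfield\<close>

definition is_subfield :: "'a::field set \<Rightarrow> bool" where
  "is_subfield K \<longleftrightarrow>
    1 \<in> K \<and> (\<forall>x\<in>K. \<forall>y\<in>K. x - y \<in> K \<and> x * y \<in> K) \<and> (\<forall>x\<in>K. inverse x \<in> K)"

definition subspace_over :: "'a::field set \<Rightarrow> 'a set \<Rightarrow> bool" where
  "subspace_over K V \<longleftrightarrow>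
    0 \<in> V \<and> (\<forall>x\<in>V. \<forall>y\<in>V. x + y \<in> V) \<and> (\<forall>l\<in>K. \<forall>x\<in>V. l * x \<in> V)"

lemma subfield_one: "is_subfield K \<Longrightarrow> 1 \<in> K"
  and subfield_diff: "is_subfield K \<Longrightarrow> x \<in> K \<Longrightarrow> y \<in> K \<Longrightarrow> x - y \<in> K"
  and subfield_mult: "is_subfield K \<Longrightarrow> x \<in> K \<Longrightarrow> y \<in> K \<Longrightarrow> x * y \<in> K"
  and subfield_inverse: "is_subfield K \<Longrightarrow> x \<in> K \<Longrightarrow> inverse x \<in> K"
  by (simp_all add: is_subfield_def)

lemma subfield_zero: "is_subfield K \<Longrightarrow> 0 \<in> K"
  using subfield_diff[OF _ subfield_one subfield_one] by simp

lemma subfield_uminus: "is_subfield K \<Longrightarrow> x \<in> K \<Longrightarrow> - x \<in> K"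
  using subfield_diff[OF _ subfield_zero] by fastforce

lemma subfield_add: "is_subfield K \<Longrightarrow> x \<in> K \<Longrightarrow> y \<in> K \<Longrightarrow> x + y \<in> K"
  using subfield_diff[of K x "- y"] subfield_uminus[of K y] by simp

lemma subfield_divide: "is_subfield K \<Longrightarrow> x \<in> K \<Longrightarrow> y \<in> K \<Longrightarrow> x / y \<in> K"
  using subfield_mult[OF _ _ subfield_inverse] by (simp add: divide_inverse)

lemma subspace_over_adjoin:
  assumes K: "is_subfield K" and U: "subspace_over K U" and "w \<notin> U"
  defines "U' \<equiv> (\<lambda>(u, l). u + l * w) ` (U \<times> K)"
  shows "subspace_over K U'" and "insert w U \<subseteq> U'"
    and "inj_on (\<lambda>(u, l). u + l * w) (U \<times> K)"
proof -
  have U_add: "x + y \<in> U" and U_smult: "l * x \<in> U" if "x \<in> U" "y \<in> U" "l \<in> K" for x y l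
    using U that by (auto simp: subspace_over_def)
  show "subspace_over K U'"
    unfolding subspace_over_def
  proof (intro conjI ballI)
    have "0 + 0 * w \<in> U'"
      unfolding U'_def using U subfield_zero[OF K]
      by (intro image_eqI[of _ _ "(0, 0)"]) (auto simp: subspace_over_def)
    then show "0 \<in> U'"
      by simp
  next
    fix x y
    assume "x \<in> U'" "y \<in> U'"
    then obtain u l u' l'
      where "u \<in> U" "l \<in> K" "u' \<in> U" "l' \<in> K" "x = u + l * w" "y = u' + l' * w"
      by (auto simp: U'_def)
    moreover have "x + y = (u + u') + (l + l') * w"
      using calculation by (simp add: algebra_simps)
    ultimately show "x + y \<in> U'"
      unfolding U'_def using U_add subfield_add[OF K]
      by (auto intro!: image_eqI[of _ _ "(u + u', l + l')"])
  next
    fix m x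
    assume "m \<in> K" "x \<in> U'"
    then obtain u l where "u \<in> U" "l \<in> K" "x = u + l * w"
      by (auto simp: U'_def)
    moreover have "m * x = m * u + (m * l) * w"
      using calculation by (simp add: algebra_simps)
    ultimately show "m * x \<in> U'"
      unfolding U'_def using \<open>m \<in> K\<close> U_smult subfield_mult[OF K] U
      by (auto intro!: image_eqI[of _ _ "(m * u, m * l)"])
  qed
  show "insert w U \<subseteq> U'"
    unfolding U'_def using subfield_zero[OF K] subfield_one[OF K] U
    by (auto simp: subspace_over_def
        intro: image_eqI[of _ _ "(0, 1)"] image_eqI[of _ _ "(u, 0)" for u])
  show "inj_on (\<lambda>(u, l). u + l * w) (U \<times> K)"
  proof (rule inj_onI, clarsimp)
    fix u l u' l'
    assume h: "u \<in> U" "l \<in> K" "u' \<in> U" "l' \<in> K" "u + l * w = u' + l' * w"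
    have "l = l'"
    proof (rule ccontr)
      assume "l \<noteq> l'"
      then have "w = inverse (l - l') * (u' + (-1) * u)"
        using h(5) by (simp add: field_simps)
      moreover have "inverse (l - l') \<in> K" "-1 \<in> K"
        using h K by (auto intro: subfield_inverse subfield_diff subfield_uminus subfield_one)
      ultimately have "w \<in> U"
        using h U_add U_smult by metis
      then show False
        using \<open>w \<notin> U\<close> by contradiction
    qed
    then show "u = u' \<and> l = l'"
      using h(5) by simp
  qed
qed

lemma card_subspace_over_eq_power:
  assumes K: "is_subfield K" "finite K" and W: "subspace_over K W" "finite W"
  shows "\<exists>k. card W = card K ^ k"
proof -
  have extend: "\<exists>k. card W = card K ^ k * card U" if "subspace_over K U" "U \<subseteq> W" for U
    using that
  proof (induction "card W - card U" arbitrary: U rule: less_induct)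
    case (less U)
    show ?case
    proof (cases "U = W")
      case True
      then show ?thesis
        by (intro exI[of _ 0]) simp
    next
      case False
      then obtain w where w: "w \<in> W" "w \<notin> U"
        using less.prems by blast
      define U' where "U' = (\<lambda>(u, l). u + l * w) ` (U \<times> K)"
      have U': "subspace_over K U'" "insert w U \<subseteq> U'"
        using subspace_over_adjoin[OF K(1) less.prems(1) w(2)] by (simp_all add: U'_def)
      have "card U' = card U * card K"
        unfolding U'_def using subspace_over_adjoin(3)[OF K(1) less.prems(1) w(2)]
        by (simp add: card_image card_cartesian_product)
      have "U' \<subseteq> W"
        unfolding U'_def using W(1) less.prems w(1) by (auto simp: subspace_over_def)
      moreover have "U \<subset> U'"
        using U'(2) w(2) by blast
      ultimately have "card U < card U'"
        using W(2) by (meson finite_subset psubset_card_mono)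
      moreover have "card U' \<le> card W"
        using \<open>U' \<subseteq> W\<close> W(2) by (rule card_mono[rotated])
      ultimately obtain k where "card W = card K ^ k * card U'"
        using less.hyps[OF _ U'(1) \<open>U' \<subseteq> W\<close>] by force
      then have "card W = card K ^ Suc k * card U"
        using \<open>card U' = card U * card K\<close> by (simp add: mult_ac)
      then show ?thesis
        by blast
    qed
  qed
  have "subspace_over K {0}" "{0} \<subseteq> W"
    using W(1) by (auto simp: subspace_over_def)
  then show ?thesis
    using extend[of "{0}"] by simp
qed

lemma dimq2_eq:
  assumes "q \<ge> 2" "card V = (q ^ 2) ^ k"
  shows "dimq2 q V = k"
  unfolding dimq2_def
proof (rule the_equality)
  show "card V = (q ^ 2) ^ k"
    by (fact assms(2))
  have "1 < q ^ 2"
    using assms(1) by (intro one_less_power) auto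
  then show "card V = (q ^ 2) ^ d \<Longrightarrow> d = k" for d
    using assms(2) by (simp add: power_inject_exp)
qed

lemma sum_lessThan_shift_periodic:
  fixes f :: "nat \<Rightarrow> 'b::cancel_comm_monoid_add"
  assumes "\<And>k. f (k + m) = f k"
  shows "(\<Sum>j<m. f (j + s)) = (\<Sum>j<m. f j)"
proof (induction s)
  case (Suc s)
  define g where "g j = f (j + s)" for j
  have "g 0 + (\<Sum>j<m. g (Suc j)) = (\<Sum>j<m. g j) + g m"
    by (metis sum.lessThan_Suc sum.lessThan_Suc_shift)
  moreover have "g m = g 0"
    using assms[of s] by (simp add: g_def add.commute[of m s])
  ultimately have "(\<Sum>j<m. g (Suc j)) = (\<Sum>j<m. g j)"
    by (simp add: add.commute[of "g 0"])
  then show ?case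
    using Suc.IH by (simp add: g_def)
qed simp

lemma dvd_power_minus_one:
  fixes x :: nat
  assumes "x > 0"
  shows "x ^ k - 1 dvd x ^ (k * j) - 1"
proof -
  have "int (x ^ k) - 1 dvd int (x ^ k) ^ j - 1"
    using power_diff_1_eq[of "int (x ^ k)" j] by simp
  then show ?thesis
    using assms by (simp add: power_mult of_nat_diff flip: of_nat_power int_dvd_int_iff)
qed

lemma eq_sign_power_if_dvd:
  fixes D X m :: int
  assumes "D\<^sup>2 = X\<^sup>2" "m dvd D - 1" "m dvd X - (-1) ^ s" "m > 2"
  shows "D = (-1) ^ s * X"
proof (rule ccontr)
  assume "D \<noteq> (-1) ^ s * X"
  moreover have "D = X \<or> D = - X"
    using assms(1) by (simp add: power2_eq_iff)
  ultimately have "D = - ((-1) ^ s * X)"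
    by (cases "even s") auto
  moreover have "(-1) ^ s * (-1) ^ s = (1::int)"
    by (simp flip: power_add)
  ultimately have "(D - 1) + (-1) ^ s * (X - (-1) ^ s) = - 2"
    by (simp add: algebra_simps)
  moreover have "m dvd (D - 1) + (-1) ^ s * (X - (-1) ^ s)"
    using assms(2,3) by simp
  ultimately have "m dvd - 2"
    by metis
  then have "m dvd 2"
    by simp
  then show False
    using assms(4) zdvd_imp_le[of m 2] by simp
qed

lemma add_one_dvd_power_minus_neg_one_power:
  fixes x :: "'a::comm_ring_1"
  shows "x + 1 dvd x ^ s - (-1) ^ s"
  using power_diff_sumr2[of x s "-1"] by simp

locale SL_setting =
  fixes p e q n :: nat and a :: "nat \<Rightarrow> 'a::{field,finite}"
  assumes prime_p: "prime p" and e_pos: "e > 0" and q_def: "q = p ^ e"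
    and CHAR_eq: "CHAR('a) = p" and card_UNIV: "card (UNIV :: 'a set) = q ^ (2 * n)"
    and n_pos: "n > 0"
begin

section \<open>Frobenius powers and the subfields F_q, F_(q^2)\<close>

lemma q_ge_2: "q \<ge> 2"
proof -
  have "p ^ 1 \<le> p ^ e"
    using e_pos prime_gt_0_nat[OF prime_p] by (intro power_increasing) auto
  then show ?thesis
    using prime_ge_2_nat[OF prime_p] q_def by simp
qed

lemma prime_CHAR: "prime CHAR('a)"
  by (simp add: CHAR_eq prime_p)

lemma frobenius_add: "(x + y :: 'a) ^ q ^ k = x ^ q ^ k + y ^ q ^ k"
  by (rule freshmans_dream') (simp_all add: CHAR_eq prime_p q_def flip: power_mult)

lemma frobenius_sum: "(sum f A :: 'a) ^ q ^ k = (\<Sum>i\<in>A. f i ^ q ^ k)"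
  by (rule freshmans_dream_sum') (simp_all add: CHAR_eq prime_p q_def flip: power_mult)

lemma frobenius_add1: "(x + y :: 'a) ^ q = x ^ q + y ^ q"
  using frobenius_add[of x y 1] by simp

lemma frobenius_uminus: "(- x :: 'a) ^ q ^ k = - (x ^ q ^ k)"
proof -
  have "x ^ q ^ k + (- x) ^ q ^ k = 0"
    using frobenius_add[of x "- x" k] q_ge_2 by (simp add: power_0_left)
  then show ?thesis
    by (simp add: eq_neg_iff_add_eq_0 add.commute)
qed

lemma frobenius_diff: "(x - y :: 'a) ^ q ^ k = x ^ q ^ k - y ^ q ^ k"
  using frobenius_add[of x "- y" k] by (simp add: frobenius_uminus)

lemma frobenius_inj: "(x :: 'a) ^ q ^ k = y ^ q ^ k \<Longrightarrow> x = y"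
  using frobenius_diff[of x y k] q_ge_2 by simp

lemma power_q_power_q: "((x :: 'a) ^ q ^ i) ^ q ^ j = x ^ q ^ (i + j)"
  by (simp add: power_add flip: power_mult)

lemma power_q_period: "(x :: 'a) ^ q ^ (2 * n + m) = x ^ q ^ m"
  using finite_field_pow_card[of x] by (simp add: card_UNIV flip: power_q_power_q)

definition fixed_field :: "nat \<Rightarrow> 'a set" where
  "fixed_field k = {x. x ^ q ^ k = x}"

abbreviation "Fq \<equiv> fixed_field 1"
abbreviation "Fq2 \<equiv> fixed_field 2"

lemma is_subfield_fixed_field: "is_subfield (fixed_field k)"
  using q_ge_2
  by (auto simp: is_subfield_def fixed_field_def frobenius_diff power_mult_distrib power_inverse)

lemmas fixed_field_zero = subfield_zero[OF is_subfield_fixed_field]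
  and fixed_field_add = subfield_add[OF is_subfield_fixed_field]
  and fixed_field_diff = subfield_diff[OF is_subfield_fixed_field]
  and fixed_field_uminus = subfield_uminus[OF is_subfield_fixed_field]
  and fixed_field_mult = subfield_mult[OF is_subfield_fixed_field]
  and fixed_field_inverse = subfield_inverse[OF is_subfield_fixed_field]
  and fixed_field_divide = subfield_divide[OF is_subfield_fixed_field]

lemma fixed_field_power_q_mult: "x \<in> fixed_field k \<Longrightarrow> x ^ q ^ (k * j) = x"
proof (induction j)
  case (Suc j)
  have "x ^ q ^ (k * Suc j) = (x ^ q ^ (k * j)) ^ q ^ k"
    by (simp add: power_q_power_q add.commute)
  then show ?case
    using Suc by (simp add: fixed_field_def)
qed simp

lemma Fq_subset_Fq2: "Fq \<subseteq> Fq2"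
  using fixed_field_power_q_mult[of _ 1 2] by (auto simp: fixed_field_def)

lemma power_q_Fq2: "x \<in> Fq2 \<Longrightarrow> (x ^ q) ^ q = x"
  by (simp add: fixed_field_def power2_eq_square flip: power_mult)

lemma power_q_in_fixed_field:
  assumes "x \<in> fixed_field k"
  shows "x ^ q ^ j \<in> fixed_field k"
proof -
  have "(x ^ q ^ j) ^ q ^ k = (x ^ q ^ k) ^ q ^ j"
    by (simp add: power_q_power_q add.commute)
  then show ?thesis
    using assms by (simp add: fixed_field_def)
qed

lemma card_fixed_field:
  assumes "k dvd 2 * n" "k > 0"
  shows "card (fixed_field k) = q ^ k"
proof -
  have "q ^ k > 1"
    using q_ge_2 assms(2) by (intro one_less_power) auto
  moreover obtain j where "2 * n = k * j"
    using assms(1) by blast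
  then have "q ^ k - 1 dvd card (UNIV :: 'a set) - 1"
    using dvd_power_minus_one[of q k j] q_ge_2 by (simp add: card_UNIV)
  ultimately show ?thesis
    unfolding fixed_field_def by (rule card_power_eq_self_finite_field)
qed

lemma card_Fq: "card Fq = q"
  using card_fixed_field[of 1] by simp

lemma card_Fq2: "card Fq2 = q\<^sup>2"
  using card_fixed_field[of 2] by simp

section \<open>The additive character psi\<close>

definition abs_trace :: "'a \<Rightarrow> 'a" where
  "abs_trace c = (\<Sum>j<e. c ^ p ^ j)"

lemma abs_trace_add: "abs_trace (x + y) = abs_trace x + abs_trace y"
  unfolding abs_trace_def
  by (simp add: sum.distrib freshmans_dream'[OF prime_CHAR] CHAR_eq)

lemma abs_trace_zero: "abs_trace 0 = 0"
  using prime_gt_0_nat[OF prime_p] by (simp add: abs_trace_def power_0_left)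

lemma abs_trace_in_prime_field:
  assumes "c \<in> Fq"
  obtains k where "k < p" "abs_trace c = of_nat k"
proof -
  have "c ^ p ^ (j + e) = (c ^ q) ^ p ^ j" for j
    by (simp add: q_def power_add mult.commute flip: power_mult)
  then have "c ^ p ^ (j + e) = c ^ p ^ j" for j
    using assms by (simp add: fixed_field_def)
  then have "(\<Sum>j<e. c ^ p ^ (j + 1)) = abs_trace c"
    unfolding abs_trace_def by (rule sum_lessThan_shift_periodic)
  then have "abs_trace c ^ p = abs_trace c"
    by (simp add: abs_trace_def freshmans_dream_sum[OF prime_CHAR CHAR_eq[symmetric]]
        mult.commute flip: power_mult)
  then have "abs_trace c \<in> of_nat ` {..<p}"
    using prime_subfield_eq[OF prime_CHAR] unfolding CHAR_eq by blast
  then show ?thesis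
    using that by blast
qed

lemma psi_eq_power:
  assumes "abs_trace c = of_nat k"
  shows "psi p e c = cis (2 * pi / p) ^ k"
proof -
  have p: "p > 0"
    using prime_gt_0_nat[OF prime_p] .
  have "(THE j. j < p \<and> (of_nat j :: 'a) = abs_trace c) = k mod p"
  proof (rule the_equality)
    show "k mod p < p \<and> (of_nat (k mod p) :: 'a) = abs_trace c"
      using p assms by (simp add: of_nat_eq_iff_cong_CHAR CHAR_eq cong_def)
    show "j < p \<and> (of_nat j :: 'a) = abs_trace c \<Longrightarrow> j = k mod p" for j
      using p assms
      by (metis of_nat_eq_iff_cong_CHAR CHAR_eq cong_less_modulus_unique_nat cong_mod_right
          cong_refl mod_less_divisor)
  qed
  then have "psi p e c = cis (real (k mod p) * (2 * pi / p))"
    unfolding psi_def Let_def abs_trace_def[symmetric] by (simp add: mult.commute)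
  also have "\<dots> = cis (2 * pi / p) ^ (k mod p)"
    by (simp only: DeMoivre)
  also have "\<dots> = cis (2 * pi / p) ^ (k mod p) * (cis (2 * pi / p) ^ p) ^ (k div p)"
    using p by (simp add: DeMoivre)
  also have "\<dots> = cis (2 * pi / p) ^ k"
    by (simp flip: power_mult power_add)
  finally show ?thesis .
qed

lemma psi_add:
  assumes "c \<in> Fq" "d \<in> Fq"
  shows "psi p e (c + d) = psi p e c * psi p e d"
proof -
  obtain i j where "abs_trace c = of_nat i" "abs_trace d = of_nat j"
    using abs_trace_in_prime_field assms by metis
  moreover from this have "psi p e (c + d) = cis (2 * pi / p) ^ (i + j)"
    by (intro psi_eq_power) (simp add: abs_trace_add)
  ultimately show ?thesis
    by (simp add: psi_eq_power power_add)
qed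

lemma psi_zero: "psi p e (0::'a) = 1"
  using psi_eq_power[of 0 0] abs_trace_zero by simp

lemma psi_ne_one:
  assumes "c \<in> Fq" "abs_trace c \<noteq> 0"
  shows "psi p e c \<noteq> 1"
proof
  assume "psi p e c = 1"
  obtain k where k: "k < p" "abs_trace c = of_nat k"
    using abs_trace_in_prime_field assms(1) by blast
  then have "cis (2 * pi * real k / real p) = cis (2 * pi * real 0 / real p)"
    using psi_eq_power[OF k(2)] \<open>psi p e c = 1\<close> by (simp add: DeMoivre mult.commute)
  then have "k = 0"
    using bij_betw_roots_unity[of p] prime_gt_0_nat[OF prime_p] k(1)
    by (auto simp: bij_betw_def inj_on_def)
  then show False
    using assms(2) k(2) by simp
qed

lemma ex_psi_ne_one: "\<exists>c\<in>Fq. psi p e c \<noteq> 1"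
proof -
  have "strict_mono (\<lambda>j. p ^ j)"
    using prime_gt_1_nat[OF prime_p] by (simp add: strict_mono_def power_strict_increasing)
  moreover have "p ^ (e - 1) < q"
    using prime_gt_1_nat[OF prime_p] e_pos q_def by (simp add: power_strict_increasing)
  then have "p ^ (e - 1) < card Fq"
    by (simp only: card_Fq)
  ultimately obtain c where "c \<in> Fq" "abs_trace c \<noteq> 0"
    using ex_lacunary_sum_nonzero[of "\<lambda>j. p ^ j" e Fq] e_pos by (auto simp: abs_trace_def)
  then show ?thesis
    using psi_ne_one by blast
qed

lemma sum_psi_eq_zero_if_shift:
  fixes A :: "'b::ab_group_add set"
  assumes "\<And>v. v \<in> A \<Longrightarrow> f v \<in> Fq" "c \<in> Fq" "psi p e c \<noteq> 1"
    and "\<And>v. v \<in> A \<Longrightarrow> v0 + v \<in> A" "\<And>v. v \<in> A \<Longrightarrow> v - v0 \<in> A"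
    and "\<And>v. v \<in> A \<Longrightarrow> f (v0 + v) = c + f v"
  shows "(\<Sum>v\<in>A. psi p e (f v)) = 0"
proof -
  have "(\<Sum>v\<in>A. psi p e (f v)) = (\<Sum>v\<in>A. psi p e (f (v0 + v)))"
    by (rule sum.reindex_bij_witness[of _ "\<lambda>v. v0 + v" "\<lambda>v. v - v0"]) (use assms in auto)
  also have "\<dots> = psi p e c * (\<Sum>v\<in>A. psi p e (f v))"
    unfolding sum_distrib_left using assms by (intro sum.cong) (simp_all add: psi_add)
  finally have "(1 - psi p e c) * (\<Sum>v\<in>A. psi p e (f v)) = 0"
    by (simp add: algebra_simps)
  then show ?thesis
    using assms(3) by simp
qed

lemma sum_psi_Fq: "(\<Sum>c\<in>Fq. psi p e c) = 0"
proof -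
  obtain c where "c \<in> Fq" "psi p e c \<noteq> 1"
    using ex_psi_ne_one by blast
  then show ?thesis
    using sum_psi_eq_zero_if_shift[of Fq "\<lambda>v. v" c c]
    by (simp add: fixed_field_add fixed_field_diff)
qed

lemma sum_psi_linear_form:
  assumes f_Fq: "\<And>v. f v \<in> Fq" and f_add: "\<And>x y. f (x + y) = f x + f y"
    and f_smult: "\<And>l v. l \<in> Fq \<Longrightarrow> f (l * v) = l * f v" and "f u \<noteq> 0"
  shows "(\<Sum>v\<in>UNIV. psi p e (f v)) = 0"
proof -
  obtain c where c: "c \<in> Fq" "psi p e c \<noteq> 1"
    using ex_psi_ne_one by blast
  have "c / f u \<in> Fq"
    using c(1) f_Fq by (rule fixed_field_divide)
  then have "f ((c / f u) * u) = c"
    using f_smult[of "c / f u" u] \<open>f u \<noteq> 0\<close> by simp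
  then show ?thesis
    using sum_psi_eq_zero_if_shift[of UNIV f c "(c / f u) * u"] c f_Fq f_add by simp
qed

section \<open>The trace and the adjoint identity\<close>

abbreviation Tr :: "'a \<Rightarrow> 'a" where "Tr \<equiv> trq2 q n"
abbreviation "L \<equiv> linL q n a"
abbreviation "Lstar \<equiv> linLstar q n a"
abbreviation "sigma \<equiv> sigmaL q n a"
abbreviation "rho \<equiv> rhoL q n a"

definition LL :: "'a \<Rightarrow> 'a" where
  "LL x = Lstar x + L x"

definition trace_q :: "'a \<Rightarrow> 'a" where
  "trace_q z = z ^ q + z"

lemma Tr_add: "Tr (x + y) = Tr x + Tr y"
  by (simp add: trq2_def frobenius_add sum.distrib)

lemma Tr_zero: "Tr 0 = 0"
  using q_ge_2 by (simp add: trq2_def power_0_left)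

lemma Tr_smult: "l \<in> Fq2 \<Longrightarrow> Tr (l * x) = l * Tr x"
  by (simp add: trq2_def power_mult_distrib fixed_field_power_q_mult sum_distrib_left)

lemma Tr_in_Fq2: "Tr x \<in> Fq2"
proof -
  define f where "f j = x ^ q ^ (2 * j)" for j
  have "f (k + n) = f k" for k
    using power_q_period[of x "2 * k"] by (simp add: f_def add.commute distrib_left)
  then have "(\<Sum>j<n. f (j + 1)) = (\<Sum>j<n. f j)"
    by (rule sum_lessThan_shift_periodic)
  moreover have "Tr x ^ q ^ 2 = (\<Sum>j<n. f (j + 1))"
    by (simp add: trq2_def frobenius_sum power_q_power_q f_def distrib_left)
  ultimately show ?thesis
    by (simp add: fixed_field_def trq2_def f_def)
qed

lemma ex_Tr_nonzero: "\<exists>v. Tr v \<noteq> 0"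
proof -
  have "strict_mono (\<lambda>j. q ^ (2 * j))"
    using q_ge_2 by (simp add: strict_mono_def power_strict_increasing)
  moreover have "q ^ (2 * (n - 1)) < card (UNIV :: 'a set)"
    using q_ge_2 n_pos by (simp add: card_UNIV power_strict_increasing)
  ultimately show ?thesis
    using ex_lacunary_sum_nonzero[of "\<lambda>j. q ^ (2 * j)" n UNIV] n_pos by (auto simp: trq2_def)
qed

lemma L_add: "L (x + y) = L x + L y"
  by (simp add: linL_def frobenius_add sum.distrib distrib_left)

lemma L_smult:
  assumes "l \<in> Fq2"
  shows "L (l * x) = l * L x"
proof -
  have "l ^ q ^ (2 * i) = l" for i
    using fixed_field_power_q_mult[OF assms] .
  then show ?thesis
    by (simp add: linL_def power_mult_distrib sum_distrib_left mult.left_commute)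
qed

lemma Lstar_add: "Lstar (x + y) = Lstar x + Lstar y"
  by (simp add: linLstar_def frobenius_add sum.distrib distrib_left)

lemma Lstar_smult:
  assumes "l \<in> Fq2"
  shows "Lstar (l * x) = l * Lstar x"
proof -
  have "l ^ q ^ (2 * i) = l" for i
    using fixed_field_power_q_mult[OF assms] .
  then show ?thesis
    by (simp add: linLstar_def power_mult_distrib sum_distrib_left mult.left_commute)
qed

lemma LL_add: "LL (x + y) = LL x + LL y"
  by (simp add: LL_def Lstar_add L_add)

lemma LL_smult: "l \<in> Fq2 \<Longrightarrow> LL (l * x) = l * LL x"
  by (simp add: LL_def Lstar_smult L_smult distrib_left)

lemma kerLL_eq: "kerLL q n a = {x. LL x = 0}"
  by (simp add: kerLL_def LL_def)

definition adjoint_term :: "'a \<Rightarrow> 'a \<Rightarrow> nat \<Rightarrow> nat \<Rightarrow> 'a" where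
  "adjoint_term w v i k = (a i * w) ^ q ^ (2 * k + 1) * v ^ q ^ (2 * (k + i + 1))"

lemma adjoint_term_period: "adjoint_term w v i (k + n) = adjoint_term w v i k"
proof -
  have "(a i * w) ^ q ^ (2 * (k + n) + 1) = (a i * w) ^ q ^ (2 * k + 1)"
    using power_q_period[of "a i * w" "2 * k + 1"] by (simp add: algebra_simps)
  moreover have "v ^ q ^ (2 * (k + n + i + 1)) = v ^ q ^ (2 * (k + i + 1))"
    using power_q_period[of v "2 * (k + i + 1)"] by (simp add: algebra_simps)
  ultimately show ?thesis
    by (simp add: adjoint_term_def)
qed

lemma power_q_L_term:
  "(w * (a i * (v ^ q) ^ q ^ (2 * i))) ^ q ^ (2 * j + 1) = adjoint_term w v i j"
proof -
  have "(v ^ q) ^ q ^ (2 * i) = v ^ q ^ (2 * i + 1)"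
    by (simp flip: power_mult)
  then have "(w * (a i * (v ^ q) ^ q ^ (2 * i))) ^ q ^ (2 * j + 1)
      = (a i * w) ^ q ^ (2 * j + 1) * (v ^ q ^ (2 * i + 1)) ^ q ^ (2 * j + 1)"
    by (simp add: power_mult_distrib mult_ac)
  also have "(v ^ q ^ (2 * i + 1)) ^ q ^ (2 * j + 1) = v ^ q ^ (2 * (j + i + 1))"
    using power_q_power_q[of v "2 * i + 1" "2 * j + 1"] by (simp add: add.commute)
  finally show ?thesis
    by (simp add: adjoint_term_def)
qed

lemma power_q_Lstar_term:
  assumes "i < n"
  shows "(v * (a i ^ q * w ^ q) ^ q ^ (2 * (n - i - 1))) ^ q ^ (2 * j)
    = adjoint_term w v i (j + (n - i - 1))"
proof -
  have "(a i ^ q * w ^ q) ^ q ^ (2 * (n - i - 1)) = (a i * w) ^ q ^ (1 + 2 * (n - i - 1))"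
    by (simp add: power_mult_distrib flip: power_mult)
  then have "(v * (a i ^ q * w ^ q) ^ q ^ (2 * (n - i - 1))) ^ q ^ (2 * j)
      = v ^ q ^ (2 * j) * ((a i * w) ^ q ^ (1 + 2 * (n - i - 1))) ^ q ^ (2 * j)"
    by (simp add: power_mult_distrib)
  also have "((a i * w) ^ q ^ (1 + 2 * (n - i - 1))) ^ q ^ (2 * j)
      = (a i * w) ^ q ^ (2 * (j + (n - i - 1)) + 1)"
    using power_q_power_q[of "a i * w" "1 + 2 * (n - i - 1)" "2 * j"] by (simp add: add.commute)
  also have "v ^ q ^ (2 * j) = v ^ q ^ (2 * (j + (n - i - 1) + i + 1))"
  proof -
    have "2 * (j + (n - i - 1) + i + 1) = 2 * n + 2 * j"
      using assms by simp
    then show ?thesis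
      using power_q_period[of v "2 * j"] by (simp only: add.commute)
  qed
  finally show ?thesis
    by (simp add: adjoint_term_def mult_ac)
qed

text \<open>Both sides expand into the double sum of the adjoint terms, which are n-periodic in the
  second index.\<close>
lemma sigma_power_q: "sigma w v ^ q = Tr (v * Lstar (w ^ q))"
proof -
  have "sigma w v ^ q = (\<Sum>j<n. (w * L (v ^ q)) ^ q ^ (2 * j)) ^ q ^ 1"
    by (simp add: sigmaL_def trq2_def)
  also have "\<dots> = (\<Sum>j<n. (w * L (v ^ q)) ^ q ^ (2 * j + 1))"
    by (simp only: frobenius_sum power_q_power_q)
  also have "\<dots> = (\<Sum>j<n. \<Sum>i<n. adjoint_term w v i j)"
    by (simp only: linL_def sum_distrib_left frobenius_sum power_q_L_term)
  also have "\<dots> = (\<Sum>i<n. \<Sum>j<n. adjoint_term w v i (j + (n - i - 1)))"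
    by (subst sum.swap) (simp only: sum_lessThan_shift_periodic adjoint_term_period)
  also have "\<dots> = (\<Sum>j<n. \<Sum>i<n. adjoint_term w v i (j + (n - i - 1)))"
    by (rule sum.swap)
  also have "\<dots> = Tr (v * Lstar (w ^ q))"
    unfolding trq2_def linLstar_def sum_distrib_left frobenius_sum
    by (intro sum.cong refl) (simp only: power_q_Lstar_term lessThan_iff)
  finally show ?thesis .
qed

section \<open>The form rho and its polarization\<close>

lemma trace_q_add: "trace_q (x + y) = trace_q x + trace_q y"
  by (simp add: trace_q_def frobenius_add1)

lemma trace_q_zero: "trace_q 0 = 0"
  using q_ge_2 by (simp add: trace_q_def)

lemma trace_q_power_q: "z \<in> Fq2 \<Longrightarrow> trace_q (z ^ q) = trace_q z"
  by (simp add: trace_q_def power_q_Fq2)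

lemma trace_q_in_Fq: "z \<in> Fq2 \<Longrightarrow> trace_q z \<in> Fq"
  by (simp add: trace_q_def fixed_field_def frobenius_add1 power_q_Fq2 add.commute)

lemma trace_q_smult: "l \<in> Fq \<Longrightarrow> trace_q (l * z) = l * trace_q z"
  by (simp add: trace_q_def fixed_field_def power_mult_distrib distrib_left)

lemma ex_trace_q_nonzero: "\<exists>m\<in>Fq2. trace_q m \<noteq> 0"
proof -
  have "strict_mono (\<lambda>j. q ^ j)"
    using q_ge_2 by (simp add: strict_mono_def power_strict_increasing)
  moreover have "q ^ (2 - 1) < card Fq2"
    using q_ge_2 by (simp add: card_Fq2 power2_eq_square)
  ultimately show ?thesis
    using ex_lacunary_sum_nonzero[of "\<lambda>j. q ^ j" 2 Fq2]
    by (simp add: trace_q_def numeral_2_eq_2 add.commute)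
qed

lemma sigma_add_left: "sigma (u + u') v = sigma u v + sigma u' v"
  by (simp add: sigmaL_def distrib_right Tr_add)

lemma sigma_add_right: "sigma u (v + v') = sigma u v + sigma u v'"
  by (simp add: sigmaL_def frobenius_add1 L_add distrib_left Tr_add)

lemma sigma_in_Fq2: "sigma u v \<in> Fq2"
  by (simp add: sigmaL_def Tr_in_Fq2)

lemma rho_eq_trace_q: "rho u = trace_q (sigma u u)"
  by (simp add: rhoL_def trace_q_def)

lemma rho_in_Fq: "rho u \<in> Fq"
  unfolding rho_eq_trace_q sigmaL_def by (rule trace_q_in_Fq[OF Tr_in_Fq2])

lemma rho_eq_Tr: "rho w = Tr (w * LL (w ^ q))"
  unfolding rhoL_def sigma_power_q by (simp add: sigmaL_def LL_def distrib_left Tr_add add.commute)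

lemma rho_polar: "rho (w + v) - rho w - rho v = trace_q (Tr (v * LL (w ^ q)))"
proof -
  have "trace_q (sigma w v) = trace_q (Tr (v * Lstar (w ^ q)))"
    using trace_q_power_q[OF sigma_in_Fq2, of w v] unfolding sigma_power_q by simp
  moreover have "rho (w + v) - rho w - rho v = trace_q (sigma w v) + trace_q (sigma v w)"
    by (simp add: rho_eq_trace_q sigma_add_left sigma_add_right trace_q_add)
  ultimately show ?thesis
    by (simp add: sigmaL_def LL_def distrib_left Tr_add trace_q_add)
qed

lemma rho_smult:
  assumes "l \<in> Fq2"
  shows "rho (l * u) = l ^ (q + 1) * rho u"
proof -
  have lq: "l ^ q \<in> Fq2"
    using power_q_in_fixed_field[OF assms, of 1] by simp
  have "sigma (l * u) (l * u) = Tr ((l * l ^ q) * (u * L (u ^ q)))"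
    by (simp add: sigmaL_def power_mult_distrib L_smult[OF lq] mult_ac)
  also have "\<dots> = (l * l ^ q) * sigma u u"
    unfolding sigmaL_def by (rule Tr_smult[OF fixed_field_mult[OF assms lq]])
  finally have "sigma (l * u) (l * u) = (l * l ^ q) * sigma u u" .
  moreover have "(l * l ^ q) ^ q = l * l ^ q"
    using power_q_Fq2[OF assms] by (simp add: power_mult_distrib mult.commute)
  ultimately show ?thesis
    by (simp add: rho_eq_trace_q trace_q_def power_mult_distrib distrib_left)
qed

definition radical :: "'a set" where
  "radical = {w. LL (w ^ q) = 0}"

lemma card_radical: "card radical = card (kerLL q n a)"
proof -
  have "inj (\<lambda>w::'a. w ^ q)"
    using frobenius_inj[of _ 1] by (simp add: inj_def)
  moreover from this have "surj (\<lambda>w::'a. w ^ q)"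
    by (simp add: finite_UNIV_inj_surj)
  then have "(\<lambda>w. w ^ q) ` radical = kerLL q n a"
    unfolding radical_def kerLL_eq by (auto dest: surjD)
  ultimately show ?thesis
    by (metis card_image inj_on_subset subset_UNIV)
qed

lemma ex_trace_q_Tr_nonzero:
  assumes "c \<noteq> 0"
  shows "\<exists>v. trace_q (Tr (v * c)) \<noteq> 0"
proof -
  obtain m where m: "m \<in> Fq2" "trace_q m \<noteq> 0"
    using ex_trace_q_nonzero by blast
  obtain v0 where v0: "Tr v0 \<noteq> 0"
    using ex_Tr_nonzero by blast
  have "m / Tr v0 \<in> Fq2"
    using m(1) Tr_in_Fq2 by (rule fixed_field_divide)
  then have "Tr ((m / Tr v0) * v0) = m"
    using Tr_smult[of "m / Tr v0" v0] v0 by simp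
  moreover have "(m / Tr v0 * v0 / c) * c = (m / Tr v0) * v0"
    using assms by simp
  ultimately show ?thesis
    using m(2) by metis
qed

lemma sum_psi_rho_polar:
  "(\<Sum>v\<in>UNIV. psi p e (rho (w + v) - rho w - rho v))
    = (if w \<in> radical then of_nat (card (UNIV :: 'a set)) else 0)"
proof (cases "w \<in> radical")
  case True
  then show ?thesis
    by (simp add: rho_polar radical_def Tr_zero trace_q_zero psi_zero)
next
  case False
  then obtain u where "trace_q (Tr (u * LL (w ^ q))) \<noteq> 0"
    using ex_trace_q_Tr_nonzero by (auto simp: radical_def)
  then have "(\<Sum>v\<in>UNIV. psi p e (trace_q (Tr (v * LL (w ^ q))))) = 0"
  proof (rule sum_psi_linear_form[rotated 3])
    show "trace_q (Tr (v * LL (w ^ q))) \<in> Fq" for v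
      by (intro trace_q_in_Fq Tr_in_Fq2)
    show "trace_q (Tr ((x + y) * LL (w ^ q)))
        = trace_q (Tr (x * LL (w ^ q))) + trace_q (Tr (y * LL (w ^ q)))" for x y
      by (simp add: distrib_right Tr_add trace_q_add)
    show "trace_q (Tr ((l * v) * LL (w ^ q))) = l * trace_q (Tr (v * LL (w ^ q)))"
      if "l \<in> Fq" for l v
      using that Fq_subset_Fq2 by (auto simp: mult.assoc Tr_smult trace_q_smult)
  qed
  then show ?thesis
    using False by (simp add: rho_polar)
qed

section \<open>Counting the values of rho\<close>

definition norm_one :: "'a set" where
  "norm_one = {x. x ^ (q + 1) = 1}"

lemma card_norm_one: "card norm_one = q + 1"
proof -
  have "q ^ 2 - 1 = (q + 1) * (q - 1)"
    using q_ge_2 by (simp add: power2_eq_square algebra_simps)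
  then have "q + 1 dvd q ^ 2 - 1"
    by (metis dvd_triv_left)
  also have "q ^ 2 - 1 dvd card (UNIV :: 'a set) - 1"
    using dvd_power_minus_one[of q 2 n] q_ge_2 by (simp add: card_UNIV)
  finally show ?thesis
    unfolding norm_one_def by (intro card_roots_of_unity_finite_field) simp_all
qed

lemma norm_one_subset_Fq2: "norm_one \<subseteq> Fq2"
proof
  fix x
  assume "x \<in> norm_one"
  then have "x ^ (q + 1) = 1"
    by (simp add: norm_one_def)
  moreover have "q ^ 2 = (q + 1) * (q - 1) + 1"
    using q_ge_2 by (simp add: power2_eq_square algebra_simps)
  then have "x ^ q ^ 2 = (x ^ (q + 1)) ^ (q - 1) * x"
    by (simp only: power_add power_mult power_one_right)
  ultimately show "x \<in> Fq2"
    by (simp add: fixed_field_def)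
qed

lemma norm_in_Fq:
  assumes "l \<in> Fq2"
  shows "l ^ (q + 1) \<in> Fq"
proof -
  have "(l * l ^ q) ^ q = l ^ q * (l ^ q) ^ q"
    by (simp only: power_mult_distrib)
  also have "\<dots> = l * l ^ q"
    using power_q_Fq2[OF assms] by (simp add: mult.commute)
  finally show ?thesis
    by (simp add: fixed_field_def)
qed

lemma norm_surj:
  assumes "c \<in> Fq" "c \<noteq> 0"
  shows "\<exists>l\<in>Fq2. l ^ (q + 1) = c"
proof -
  define I where "I = (\<lambda>l. l ^ (q + 1)) ` (Fq2 - {0})"
  have "I \<subseteq> Fq - {0}"
    using norm_in_Fq by (auto simp: I_def)
  have "(q - 1) * (q + 1) = card (Fq2 - {0})"
    using q_ge_2 card_Fq2 fixed_field_zero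
    by (simp add: card_Diff_singleton power2_eq_square algebra_simps)
  also have "Fq2 - {0} \<subseteq> (\<Union>y\<in>I. {x. x ^ (q + 1) = y})"
    by (auto simp: I_def)
  then have "card (Fq2 - {0}) \<le> card (\<Union>y\<in>I. {x. x ^ (q + 1) = y})"
    by (intro card_mono) auto
  also have "\<dots> \<le> (\<Sum>y\<in>I. card {x. x ^ (q + 1) = y})"
    by (rule card_UN_le) (simp add: I_def)
  also have "\<dots> \<le> card I * (q + 1)"
  proof -
    have "card {x::'a. x ^ (q + 1) = y} \<le> q + 1" for y
      by (rule card_pow_eq_le) simp
    then have "(\<Sum>y\<in>I. card {x::'a. x ^ (q + 1) = y}) \<le> of_nat (card I) * (q + 1)"
      by (rule sum_bounded_above)
    then show ?thesis
      by simp
  qed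
  finally have "(q - 1) * (q + 1) \<le> card I * (q + 1)" .
  then have "q - 1 \<le> card I"
    by (simp only: mult_le_cancel2)
  then have "card (Fq - {0}) \<le> card I"
    using card_Fq fixed_field_zero by (simp add: card_Diff_singleton)
  then have "I = Fq - {0}"
    using \<open>I \<subseteq> Fq - {0}\<close> by (intro card_seteq) auto
  then have "c \<in> (\<lambda>l. l ^ (q + 1)) ` (Fq2 - {0})"
    using assms unfolding I_def by blast
  then show ?thesis
    by auto
qed

definition rho_count :: "'a \<Rightarrow> nat" where
  "rho_count c = card {u. rho u = c}"

lemma rho_count_eq:
  assumes "c \<in> Fq" "c \<noteq> 0"
  shows "rho_count c = rho_count 1"
proof -
  obtain l where l: "l \<in> Fq2" "l ^ (q + 1) = c"
    using norm_surj[OF assms] by blast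
  then have "l \<noteq> 0" "inverse l \<in> Fq2"
    using assms(2) fixed_field_inverse by auto
  have "bij_betw (\<lambda>u. l * u) {u. rho u = 1} {u. rho u = c}"
  proof (rule bij_betw_byWitness[where f' = "\<lambda>u. inverse l * u"])
    show "(\<lambda>u. inverse l * u) ` {u. rho u = c} \<subseteq> {u. rho u = 1}"
    proof (rule image_subsetI)
      fix u
      assume "u \<in> {u. rho u = c}"
      then have "rho u = c"
        by simp
      have "rho (inverse l * u) = inverse l ^ (q + 1) * rho u"
        by (rule rho_smult[OF \<open>inverse l \<in> Fq2\<close>])
      also have "\<dots> = inverse c * c"
        by (simp only: power_inverse l(2) \<open>rho u = c\<close>)
      finally show "inverse l * u \<in> {u. rho u = 1}"
        using assms(2) by simp
    qed
  qed (use \<open>l \<noteq> 0\<close> rho_smult[OF l(1)] l(2) in auto)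
  then show ?thesis
    unfolding rho_count_def by (metis bij_betw_same_card)
qed

lemma sum_rho_eq:
  fixes g :: "'a \<Rightarrow> complex"
  assumes "(\<Sum>c\<in>Fq. g c) = 0"
  shows "(\<Sum>u\<in>UNIV. g (rho u)) = (of_nat (rho_count 0) - of_nat (rho_count 1)) * g 0"
proof -
  have "(\<Sum>u\<in>UNIV. g (rho u)) = (\<Sum>c\<in>Fq. of_nat (rho_count c) * g c)"
    using sum.group[of UNIV Fq rho "\<lambda>u. g (rho u)"] rho_in_Fq
    by (simp add: rho_count_def image_subset_iff)
  also have "\<dots> = of_nat (rho_count 0) * g 0 + (\<Sum>c\<in>Fq - {0}. of_nat (rho_count c) * g c)"
    using sum.remove[of Fq 0 "\<lambda>c. of_nat (rho_count c) * g c"] fixed_field_zero by simp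
  also have "(\<Sum>c\<in>Fq - {0}. of_nat (rho_count c) * g c)
      = (\<Sum>c\<in>Fq - {0}. of_nat (rho_count 1) * g c)"
    by (intro sum.cong refl) (simp add: rho_count_eq)
  also have "\<dots> = - of_nat (rho_count 1) * g 0"
  proof -
    have "(\<Sum>c\<in>Fq - {0}. g c) = - g 0"
      using assms fixed_field_zero sum.remove[of Fq 0 g]
      by (simp add: eq_neg_iff_add_eq_0 add.commute)
    then show ?thesis
      by (simp flip: sum_distrib_left)
  qed
  finally show ?thesis
    by (simp add: algebra_simps)
qed

lemma SL_eq_rho_count: "SL p e q n a = of_nat (rho_count 0) - of_nat (rho_count 1)"
  using sum_rho_eq[OF sum_psi_Fq] by (simp add: SL_def psi_zero)

lemma sum_psi_uminus_rho: "(\<Sum>u\<in>UNIV. psi p e (- rho u)) = SL p e q n a"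
proof -
  have "(\<Sum>c\<in>Fq. psi p e (- c)) = (\<Sum>c\<in>Fq. psi p e c)"
    by (rule sum.reindex_bij_witness[of _ uminus uminus]) (auto intro: fixed_field_uminus)
  then show ?thesis
    using sum_rho_eq[of "\<lambda>c. psi p e (- c)"] sum_psi_Fq by (simp add: SL_eq_rho_count psi_zero)
qed

lemma sum_psi_rho_diff:
  "(\<Sum>u\<in>UNIV. psi p e (rho u - rho v))
    = (\<Sum>w\<in>UNIV. psi p e (rho w) * psi p e (rho (w + v) - rho w - rho v))"
proof -
  have "(\<Sum>u\<in>UNIV. psi p e (rho u - rho v)) = (\<Sum>w\<in>UNIV. psi p e (rho (w + v) - rho v))"
    by (rule sum.reindex_bij_witness[of _ "\<lambda>w. w + v" "\<lambda>u. u - v"]) auto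
  also have "\<dots> = (\<Sum>w\<in>UNIV. psi p e (rho w) * psi p e (rho (w + v) - rho w - rho v))"
  proof (intro sum.cong refl)
    fix w
    have polar_Fq: "rho (w + v) - rho w - rho v \<in> Fq"
      by (intro fixed_field_diff rho_in_Fq)
    then show "psi p e (rho (w + v) - rho v)
        = psi p e (rho w) * psi p e (rho (w + v) - rho w - rho v)"
      using psi_add[OF rho_in_Fq[of w] polar_Fq] by simp
  qed
  finally show ?thesis .
qed

lemma SL_mult_SL:
  "SL p e q n a * SL p e q n a = of_nat (card (UNIV :: 'a set) * card radical)"
proof -
  have "SL p e q n a * SL p e q n a
      = (\<Sum>u\<in>UNIV. psi p e (rho u)) * (\<Sum>v\<in>UNIV. psi p e (- rho v))"
    unfolding sum_psi_uminus_rho by (simp add: SL_def)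
  also have "\<dots> = (\<Sum>u\<in>UNIV. \<Sum>v\<in>UNIV. psi p e (rho u - rho v))"
    unfolding sum_product
    using psi_add[OF rho_in_Fq fixed_field_uminus[OF rho_in_Fq]] by simp
  also have "\<dots> = (\<Sum>v\<in>UNIV. \<Sum>u\<in>UNIV. psi p e (rho u - rho v))"
    by (rule sum.swap)
  also have "\<dots> = (\<Sum>v\<in>UNIV. \<Sum>w\<in>UNIV.
      psi p e (rho w) * psi p e (rho (w + v) - rho w - rho v))"
    by (simp only: sum_psi_rho_diff)
  also have "\<dots> = (\<Sum>w\<in>UNIV.
      psi p e (rho w) * (\<Sum>v\<in>UNIV. psi p e (rho (w + v) - rho w - rho v)))"
    unfolding sum_distrib_left by (rule sum.swap)
  also have "\<dots> = (\<Sum>w\<in>UNIV.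
      psi p e (rho w) * (if w \<in> radical then of_nat (card (UNIV :: 'a set)) else 0))"
    by (simp add: sum_psi_rho_polar)
  also have "\<dots> = (\<Sum>w\<in>UNIV. if w \<in> radical then of_nat (card (UNIV :: 'a set)) else 0)"
    by (intro sum.cong refl) (simp add: radical_def rho_eq_Tr Tr_zero psi_zero)
  also have "\<dots> = of_nat (card (UNIV :: 'a set) * card radical)"
    by (simp add: sum.If_cases)
  finally show ?thesis .
qed

lemma rho_zero: "rho 0 = 0"
  using q_ge_2 by (simp add: rho_eq_Tr Tr_zero)

lemma rho_norm_one_mult: "l \<in> norm_one \<Longrightarrow> rho (l * u) = rho u"
  using rho_smult[of l u] norm_one_subset_Fq2 by (auto simp: norm_one_def)

lemma norm_one_mult: "l \<in> norm_one \<Longrightarrow> l' \<in> norm_one \<Longrightarrow> l * l' \<in> norm_one"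
  and norm_one_inverse: "l \<in> norm_one \<Longrightarrow> inverse l \<in> norm_one"
  and one_in_norm_one: "1 \<in> norm_one"
  and zero_notin_norm_one: "0 \<notin> norm_one"
  by (simp_all add: norm_one_def power_mult_distrib power_inverse del: power_Suc)

lemma norm_one_dvd_card:
  assumes "0 \<notin> A" "\<And>l u. l \<in> norm_one \<Longrightarrow> u \<in> A \<Longrightarrow> l * u \<in> A"
  shows "q + 1 dvd card A"
  unfolding card_norm_one[symmetric]
  by (rule card_dvd_card_if_free_action)
    (use assms norm_one_mult norm_one_inverse one_in_norm_one in auto)

lemma dvd_rho_count_one: "q + 1 dvd rho_count 1"
  unfolding rho_count_def by (rule norm_one_dvd_card) (simp_all add: rho_zero rho_norm_one_mult)

lemma dvd_rho_count_zero: "q + 1 dvd rho_count 0 - 1"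
proof -
  have "q + 1 dvd card ({u. rho u = 0} - {0})"
    by (rule norm_one_dvd_card) (use zero_notin_norm_one in \<open>auto simp: rho_norm_one_mult\<close>)
  then show ?thesis
    by (simp add: rho_count_def card_Diff_singleton rho_zero)
qed

lemma rho_count_zero_pos: "rho_count 0 > 0"
  unfolding rho_count_def using rho_zero by (intro card_gt_0_iff[THEN iffD2]) auto

lemma card_kerLL: "card (kerLL q n a) = (q\<^sup>2) ^ dimq2 q (kerLL q n a)"
proof -
  have "LL 0 = 0"
    using LL_smult[OF fixed_field_zero, of 0] by simp
  then have "subspace_over Fq2 (kerLL q n a)"
    using LL_add LL_smult by (auto simp: subspace_over_def kerLL_eq)
  then obtain k where "card (kerLL q n a) = card Fq2 ^ k"
    using card_subspace_over_eq_power[OF is_subfield_fixed_field finite _ finite] by blast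
  then show ?thesis
    unfolding card_Fq2 using dimq2_eq[OF q_ge_2] by metis
qed

lemma dimq2_kerLL_le: "dimq2 q (kerLL q n a) \<le> n"
proof -
  have "(q\<^sup>2) ^ dimq2 q (kerLL q n a) \<le> (q\<^sup>2) ^ n"
    using card_mono[of UNIV "kerLL q n a"] card_kerLL card_UNIV by (simp add: power_mult)
  moreover have "1 < q\<^sup>2"
    using q_ge_2 by (intro one_less_power) auto
  ultimately show ?thesis
    using power_le_imp_le_exp by blast
qed

lemma card_UNIV_mult_card_radical:
  "card (UNIV :: 'a set) * card radical = (q ^ (n + dimq2 q (kerLL q n a)))\<^sup>2"
proof -
  have "card (UNIV :: 'a set) * card radical = q ^ (2 * n) * (q\<^sup>2) ^ dimq2 q (kerLL q n a)"
    by (simp add: card_radical card_kerLL card_UNIV)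
  then show ?thesis
    unfolding power_mult[symmetric] power_add[symmetric] by (simp add: algebra_simps)
qed

lemma rho_count_diff_cong: "int q + 1 dvd (int (rho_count 0) - int (rho_count 1)) - 1"
proof -
  have "int (q + 1) dvd int (rho_count 0 - 1) - int (rho_count 1)"
    using dvd_rho_count_zero dvd_rho_count_one by (simp only: int_dvd_int_iff dvd_diff)
  then show ?thesis
    using rho_count_zero_pos by (simp add: of_nat_diff algebra_simps)
qed

lemma SL_eq_sign_power:
  defines "k \<equiv> dimq2 q (kerLL q n a)"
  shows "SL p e q n a = (-1) ^ (n + k) * of_nat (q ^ (n + k))"
proof -
  define D :: int where "D = int (rho_count 0) - int (rho_count 1)"
  have SL_D: "SL p e q n a = of_int D"
    by (simp add: SL_eq_rho_count D_def)
  have "of_int (D\<^sup>2) = SL p e q n a * SL p e q n a"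
    by (simp add: SL_D power2_eq_square)
  also have "\<dots> = of_nat ((q ^ (n + k))\<^sup>2)"
    unfolding SL_mult_SL card_UNIV_mult_card_radical k_def ..
  finally have "D\<^sup>2 = (int q ^ (n + k))\<^sup>2"
    by (metis of_int_eq_iff of_int_of_nat_eq of_nat_power)
  then have "D = (-1) ^ (n + k) * int q ^ (n + k)"
    using eq_sign_power_if_dvd[of D "int q ^ (n + k)" "int q + 1" "n + k"]
      add_one_dvd_power_minus_neg_one_power[of "int q" "n + k"] rho_count_diff_cong q_ge_2
    by (simp add: D_def)
  then show ?thesis
    by (simp add: SL_D)
qed

end

theorem theorem3p2:
  fixes a :: "nat \<Rightarrow> 'a::{field,finite}"
    and p e q n :: nat
  assumes "prime p" and "e > 0" and "q = p ^ e"
    and "CHAR('a) = p"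
    and "card (UNIV :: 'a set) = q ^ (2 * n)"
    and "n > 0"
  shows "SL p e q n a =
           (-1) ^ (n - dimq2 q (kerLL q n a)) * of_nat (q ^ (2 * n - (n - dimq2 q (kerLL q n a))))"
proof -
  interpret SL_setting p e q n a
    using assms by unfold_locales
  define k where "k = dimq2 q (kerLL q n a)"
  have "k \<le> n" and "SL p e q n a = (-1) ^ (n + k) * of_nat (q ^ (n + k))"
    using dimq2_kerLL_le SL_eq_sign_power unfolding k_def by simp_all
  moreover have "(-1 :: complex) ^ (n - k) = (-1) ^ (n + k)"
    by (rule neg_one_power_add_eq_neg_one_power_diff[OF \<open>k \<le> n\<close>, symmetric])
  moreover have "2 * n - (n - k) = n + k"
    using \<open>k \<le> n\<close> by simp
  ultimately show ?thesis
    unfolding k_def[symmetric] by (simp only:)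
qed

end
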